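(* (ZFC.) Let $F\subseteq\mathsf{Agg}^{\sigma}$ be a set with $|F|\le\mathfrak{c}$. Then the $\sigma$-clone generated by $F$ has cardinality at most $\mathfrak{c}$.
   Context: $\mathfrak{c}=2^{\aleph_0}$; the axiom of choice is assumed. $\omega$ is the first infinite ordinal. For an arity $\alpha$ with $0<\alpha\le\omega$ (a positive integer $n=\{0,\dots,n-1\}$ or $\omega$), an $\alpha$-ary aggregation function is a function $f\colon[0,1]^{\alpha}\to[0,1]$ nondecreasing in each coordinate with $f$ equal to $0$ at the all-zero vector and $1$ at the all-one vector. $\mathsf{Agg}$ is the set of aggregation functions of finite arity, $\mathsf{Agg}^{\omega}$ the set of those of arity $\omega$, and $\mathsf{Agg}^{\sigma}=\mathsf{Agg}\cup\mathsf{Agg}^{\omega}$. For an $\alpha$-ary $f$ and $\beta$-ary functions $g_i$, $i<\alpha$ ($0<\alpha,\beta\le\omega$), the composition $f\circ(g_i:i<\alpha)$ is the $\beta$-ary function $\mathbf{x}\mapsto f((g_i(\mathbf{x}))_{i<\alpha})$. A $\sigma$-clone is a set of functions on $[0,1]$ of arities $\alpha$ with $0<\alpha\le\omega$ that contains all projections $p^{\alpha}_i((x_j)_{j<\alpha})=x_i$ ($i<\alpha$) and is closed under such compositions; the $\sigma$-clone generated by $F$ is the smallest $\sigma$-clone containing $F$. *)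

theory Defs
  imports Main "HOL-Library.FuncSet" "HOL-Library.Equipollence" "HOL-Library.Extended_Nat"
    "HOL-Library.Cardinality" Complex_Main
begin

text \<open>An arity is an element alpha of enat with 0 < alpha; the value infinity stands for omega.
  A point of [0,1]^alpha is represented as a sequence nat => real whose coordinates
  i < alpha lie in [0,1] and whose remaining coordinates are 0 (canonical padding).\<close>

definition cube :: "enat \<Rightarrow> (nat \<Rightarrow> real) set" where
  "cube a = {x. (\<forall>i. enat i < a \<longrightarrow> x i \<in> {0..1}) \<and> (\<forall>i. \<not> enat i < a \<longrightarrow> x i = 0)}"

type_synonym opn = "enat \<times> ((nat \<Rightarrow> real) \<Rightarrow> real)"

definition is_fun :: "opn \<Rightarrow> bool" where
  "is_fun p \<longleftrightarrow> 0 < fst p \<and> snd p \<in> extensional (cube (fst p))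
      \<and> snd p ` cube (fst p) \<subseteq> {0..1}"

definition zero_vec :: "enat \<Rightarrow> nat \<Rightarrow> real" where
  "zero_vec a = (\<lambda>i. 0)"

definition one_vec :: "enat \<Rightarrow> nat \<Rightarrow> real" where
  "one_vec a = (\<lambda>i. if enat i < a then 1 else 0)"

definition is_agg :: "opn \<Rightarrow> bool" where
  "is_agg p \<longleftrightarrow> is_fun p \<and>
     (\<forall>x\<in>cube (fst p). \<forall>i t. enat i < fst p \<longrightarrow> t \<in> {0..1} \<longrightarrow> x i \<le> t
        \<longrightarrow> snd p x \<le> snd p (x(i := t))) \<and>
     snd p (zero_vec (fst p)) = 0 \<and> snd p (one_vec (fst p)) = 1"

definition AggSigma :: "opn set" where
  "AggSigma = {p. is_agg p}"

definition proj :: "enat \<Rightarrow> nat \<Rightarrow> opn" where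
  "proj a i = (a, restrict (\<lambda>x. x i) (cube a))"

definition compose :: "opn \<Rightarrow> enat \<Rightarrow> (nat \<Rightarrow> (nat \<Rightarrow> real) \<Rightarrow> real) \<Rightarrow> opn" where
  "compose p b g = (b, restrict (\<lambda>x. snd p (\<lambda>i. if enat i < fst p then g i x else 0)) (cube b))"

definition sigma_clone :: "opn set \<Rightarrow> bool" where
  "sigma_clone C \<longleftrightarrow>
     (\<forall>p\<in>C. is_fun p) \<and>
     (\<forall>a i. 0 < a \<longrightarrow> enat i < a \<longrightarrow> proj a i \<in> C) \<and>
     (\<forall>p\<in>C. \<forall>b g. 0 < b \<longrightarrow> (\<forall>i. enat i < fst p \<longrightarrow> (b, g i) \<in> C)
         \<longrightarrow> compose p b g \<in> C)"

definition generated_sigma_clone :: "opn set \<Rightarrow> opn set" where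
  "generated_sigma_clone F = \<Inter> {C. sigma_clone C \<and> F \<subseteq> C}"

end

theory Submission
  imports Defs "HOL-Analysis.Analysis"
begin

text \<open>Every member of the \<sigma>-clone generated by \<open>F\<close> is the value of a \<sigma>-term over \<open>F\<close>:
  a well-founded, countably branching tree whose leaves are generators or projections and whose
  inner nodes are compositions. A term is determined by the map sending each finite path (a list
  of child indices) to the label of the node where it ends; once the generators are coded by sets
  of naturals, this injects the terms over \<open>F\<close> into \<open>nat list \<Rightarrow> nat set\<close>, a set of the
  size of the continuum.\<close>

lemma countable_funspace_lepoll_nat_sets:
  "(UNIV :: ('k::countable \<Rightarrow> nat set) set) \<lesssim> (UNIV :: nat set set)"
proof -
  define code :: "('k \<Rightarrow> nat set) \<Rightarrow> nat set"
    where "code f = {to_nat (k, n) | k n. n \<in> f k}" for f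
  have "f k = {n. to_nat (k, n) \<in> code f}" for f k
    by (auto simp: code_def)
  then have "inj code"
    by (metis injI ext)
  then show ?thesis
    unfolding lepoll_def by blast
qed

datatype 'a sterm = Gen 'a | Prj enat nat | Cmp "'a sterm" enat "nat \<Rightarrow> 'a sterm"

primrec sterm_eval :: "opn sterm \<Rightarrow> opn" where
  "sterm_eval (Gen p) = p"
| "sterm_eval (Prj a i) = proj a i"
| "sterm_eval (Cmp t b ts) = compose (sterm_eval t) b (\<lambda>i. snd (sterm_eval (ts i)))"

text \<open>Only generator labels contain \<open>0\<close>, so the root label determines the root node.\<close>

primrec sterm_root_label :: "nat set sterm \<Rightarrow> nat set" where
  "sterm_root_label (Gen S) = insert 0 (Suc ` S)"
| "sterm_root_label (Prj a i) = {Suc (to_nat (Inl (a, i) :: enat \<times> nat + enat))}"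
| "sterm_root_label (Cmp t b ts) = {Suc (to_nat (Inr b :: enat \<times> nat + enat))}"

primrec sterm_tree :: "nat set sterm \<Rightarrow> nat list \<Rightarrow> nat set" where
  "sterm_tree (Gen S) = (\<lambda>_. sterm_root_label (Gen S))"
| "sterm_tree (Prj a i) = (\<lambda>_. sterm_root_label (Prj a i))"
| "sterm_tree (Cmp t b ts) = (\<lambda>xs. case xs of
      [] \<Rightarrow> sterm_root_label (Cmp t b ts)
    | 0 # ys \<Rightarrow> sterm_tree t ys
    | Suc i # ys \<Rightarrow> sterm_tree (ts i) ys)"

lemma sterm_tree_Nil: "sterm_tree t [] = sterm_root_label t"
  by (cases t) simp_all

lemma inj_sterm_tree: "inj sterm_tree"
proof (rule injI)
  fix t u :: "nat set sterm"
  assume "sterm_tree t = sterm_tree u"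
  then show "t = u"
  proof (induction t arbitrary: u)
    case (Gen S)
    then have "sterm_root_label (Gen S) = sterm_root_label u"
      by (metis sterm_tree_Nil)
    then show ?case
      by (cases u) (auto simp: inj_image_eq_iff)
  next
    case (Prj a i)
    then have "sterm_root_label (Prj a i) = sterm_root_label u"
      by (metis sterm_tree_Nil)
    then show ?case
      by (cases u) (auto simp: to_nat_split)
  next
    case (Cmp t b ts)
    then have root: "sterm_root_label (Cmp t b ts) = sterm_root_label u"
      by (metis sterm_tree_Nil)
    then obtain t' ts' where u: "u = Cmp t' b ts'"
      by (cases u) (auto simp: to_nat_split)
    have "sterm_tree t = sterm_tree t'"
      using fun_cong[OF Cmp.prems, of "0 # _"] u by auto
    then have "t = t'"
      by (rule Cmp.IH(1))
    have "sterm_tree (ts i) = sterm_tree (ts' i)" for i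
      using fun_cong[OF Cmp.prems, of "Suc i # _"] u by auto
    then have "ts = ts'"
      using Cmp.IH(2)[OF rangeI] by blast
    show ?case
      using u \<open>t = t'\<close> \<open>ts = ts'\<close> by simp
  qed
qed

lemma sterms_over_lepoll_nat_sets:
  assumes "A \<lesssim> (UNIV :: nat set set)"
  shows "{t :: 'a sterm. set_sterm t \<subseteq> A} \<lesssim> (UNIV :: nat set set)"
proof -
  obtain e :: "'a \<Rightarrow> nat set" where e: "inj_on e A"
    using assms unfolding lepoll_def by blast
  have "inj_on (map_sterm e) {t. set_sterm t \<subseteq> A}"
  proof (rule inj_onI)
    fix t u
    assume "t \<in> {t. set_sterm t \<subseteq> A}" "u \<in> {t. set_sterm t \<subseteq> A}"
      and "map_sterm e t = map_sterm e u"
    then show "t = u"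
      using inj_onD[OF e] by (intro sterm.inj_map_strong[of t u e e]) blast+
  qed
  then have "{t. set_sterm t \<subseteq> A} \<lesssim> (UNIV :: nat set sterm set)"
    unfolding lepoll_def by blast
  also have "\<dots> \<lesssim> (UNIV :: (nat list \<Rightarrow> nat set) set)"
    using inj_sterm_tree unfolding lepoll_def by blast
  also have "\<dots> \<lesssim> (UNIV :: nat set set)"
    by (rule countable_funspace_lepoll_nat_sets)
  finally show ?thesis .
qed

lemma cube_coordinate:
  assumes "x \<in> cube a"
  shows "x i \<in> {0..1}"
  using assms by (cases "enat i < a") (auto simp: cube_def)

lemma is_fun_proj:
  assumes "0 < a"
  shows "is_fun (proj a i)"
  using assms cube_coordinate by (auto simp: is_fun_def proj_def)

lemma compose_cong:
  assumes "\<And>i. enat i < fst p \<Longrightarrow> g i = g' i"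
  shows "compose p b g = compose p b g'"
  unfolding compose_def using assms by (auto intro!: restrict_ext arg_cong[where f = "snd p"])

lemma is_fun_compose:
  assumes p: "is_fun p" and "0 < b" and g: "\<And>i. enat i < fst p \<Longrightarrow> is_fun (b, g i)"
  shows "is_fun (compose p b g)"
proof -
  have "(\<lambda>i. if enat i < fst p then g i x else 0) \<in> cube (fst p)" if "x \<in> cube b" for x
    using g that by (auto simp: cube_def is_fun_def image_subset_iff)
  then have "snd (compose p b g) ` cube b \<subseteq> {0..1}"
    using p by (auto simp: compose_def is_fun_def)
  then show ?thesis
    using \<open>0 < b\<close> by (simp add: is_fun_def compose_def)
qed

definition sterm_values :: "opn set \<Rightarrow> opn set" where
  "sterm_values F = sterm_eval ` {t. set_sterm t \<subseteq> F}"

text \<open>Terms with mismatched arities may evaluate to non-functions, hence the intersection.\<close>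

lemma sigma_clone_sterm_values:
  assumes "\<forall>p\<in>F. is_fun p"
  shows "sigma_clone ({p. is_fun p} \<inter> sterm_values F)"
  unfolding sigma_clone_def
proof (intro conjI ballI allI impI)
  fix a i
  assume "0 < a" "enat i < a"
  then show "proj a i \<in> {p. is_fun p} \<inter> sterm_values F"
    using is_fun_proj image_eqI[of "proj a i" sterm_eval "Prj a i"]
    by (auto simp: sterm_values_def)
next
  fix p b g
  assume p: "p \<in> {p. is_fun p} \<inter> sterm_values F" and "0 < b"
    and g: "\<forall>i. enat i < fst p \<longrightarrow> (b, g i) \<in> {p. is_fun p} \<inter> sterm_values F"
  obtain t where t: "set_sterm t \<subseteq> F" "sterm_eval t = p"
    using p unfolding sterm_values_def by blast
  have "\<forall>i. \<exists>u. enat i < fst p \<longrightarrow> set_sterm u \<subseteq> F \<and> sterm_eval u = (b, g i)"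
    using g unfolding sterm_values_def by (auto simp: image_iff) metis
  then obtain ts where ts: "\<forall>i. enat i < fst p \<longrightarrow> set_sterm (ts i) \<subseteq> F \<and> sterm_eval (ts i) = (b, g i)"
    by (rule exE[OF choice])
  \<comment> \<open>\<open>compose\<close> ignores children beyond the arity of \<open>p\<close>; there \<open>Prj\<close> keeps the term over \<open>F\<close>.\<close>
  define ts' where "ts' i = (if enat i < fst p then ts i else Prj b 0)" for i
  have "compose p b g = sterm_eval (Cmp t b ts')"
    using t ts by (auto simp: ts'_def intro!: compose_cong)
  moreover have "set_sterm (Cmp t b ts') \<subseteq> F"
    using t ts by (auto simp: ts'_def)
  moreover have "is_fun (compose p b g)"
    using p g by (intro is_fun_compose \<open>0 < b\<close>) simp_all
  ultimately show "compose p b g \<in> {p. is_fun p} \<inter> sterm_values F"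
    unfolding sterm_values_def by blast
qed simp

lemma generated_sigma_clone_subset_sterm_values:
  assumes "\<forall>p\<in>F. is_fun p"
  shows "generated_sigma_clone F \<subseteq> sterm_values F"
proof -
  have "F \<subseteq> sterm_values F"
    unfolding sterm_values_def by (auto intro!: image_eqI[where x = "Gen _"])
  then have "F \<subseteq> {p. is_fun p} \<inter> sterm_values F"
    using assms by blast
  then have "generated_sigma_clone F \<subseteq> {p. is_fun p} \<inter> sterm_values F"
    using sigma_clone_sterm_values[OF assms]
    unfolding generated_sigma_clone_def by (intro Inter_lower) simp
  then show ?thesis
    by blast
qed

theorem theorem2:
  fixes F :: "opn set"
  assumes "F \<subseteq> AggSigma"
    and "F \<lesssim> (UNIV :: real set)"
  shows "generated_sigma_clone F \<lesssim> (UNIV :: real set)"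
proof -
  have funs: "\<forall>p\<in>F. is_fun p"
    using assms(1) by (auto simp: AggSigma_def is_agg_def)
  have "F \<lesssim> (UNIV :: nat set set)"
    using assms(2) lepoll_trans2 eqpoll_sym nat_sets_eqpoll_reals by blast
  then have "sterm_values F \<lesssim> (UNIV :: nat set set)"
    unfolding sterm_values_def
    using sterms_over_lepoll_nat_sets image_lepoll lepoll_trans by blast
  then have "generated_sigma_clone F \<lesssim> (UNIV :: nat set set)"
    using generated_sigma_clone_subset_sterm_values[OF funs] subset_imp_lepoll lepoll_trans
    by blast
  then show ?thesis
    using lepoll_trans2 nat_sets_eqpoll_reals by blast
qed

end
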